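(* Let $p\ge1$ and let $u,v\in E_1$ be such that $\Gamma^p_u$ is isomorphic to $\Gamma^p_v$ (as unrooted graphs). Then the sequences $\mathcal L^u$ and $\mathcal L^v$ are compatible.
   Context: $X=\{0,\dots,p\}$; $\mathcal G_{S_p}$ is generated by $e_1,\dots,e_p$ acting on $X^\infty$ by $e_i(0w)=i\,e_i(w)$, $e_i(iw)=0w$, $e_i(jw)=jw$ for $j\notin\{0,i\}$; $\Gamma^p_u$ is the Schreier graph on the orbit of $u$ (edges $x$—$e_i(x)$). $E_1$ is the set of $w\in X^\infty$ with $\Gamma^p_w$ one-ended; every $w\in E_1$ has an infinite decomposition $w=0^ka_1u_1a_2u_2\cdots$ with $k\ge0$, $a_j\in\{1,\dots,p\}$, $a_{j+1}\ne a_j$, $u_j\in\{0,a_j\}^\ast$ finite. With $N_j=k+j+\sum_{\ell\le j}|u_\ell|$, the path of cycles of $w$ consists of the $e_{a_j}$-cycles with vertex sets $\{0,a_j\}^{N_j}a_{j+1}u_{j+1}a_{j+2}u_{j+2}\cdots$, and $\mathcal L^w=(2^{N_j})_{j\ge1}$ is the sequence of their lengths. Two integer sequences $(x_i),(y_i)$ are compatible if there exist $l,h\in\mathbb N$ with $x_{l+n}=y_{h+n}$ for all $n\in\mathbb N$. *)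

theory Defs
  imports Main
begin

text \<open>Infinite words over X = {0,...,p} are functions nat => nat with values at most p.\<close>

definition Xinf :: "nat \<Rightarrow> (nat \<Rightarrow> nat) set" where
  "Xinf p = {w. \<forall>n. w n \<le> p}"

text \<open>The generator e_i: e_i(0w) = i e_i(w), e_i(iw) = 0w, e_i(jw) = jw otherwise.
  Unfolded: position n is changed iff all earlier letters are 0; there 0 becomes i and i becomes 0.\<close>

definition gen :: "nat \<Rightarrow> (nat \<Rightarrow> nat) \<Rightarrow> (nat \<Rightarrow> nat)" where
  "gen i w n = (if (\<forall>m<n. w m = 0)
                then (if w n = 0 then i else if w n = i then 0 else w n)
                else w n)"

definition sadj :: "nat \<Rightarrow> (nat \<Rightarrow> nat) \<Rightarrow> (nat \<Rightarrow> nat) \<Rightarrow> bool" where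
  "sadj p x y \<longleftrightarrow> (\<exists>i\<in>{1..p}. y = gen i x \<or> x = gen i y)"

text \<open>Vertex set of the Schreier graph Gamma^p_u: the orbit of u under the group generated
  by e_1,...,e_p (each e_i is a bijection of X^infinity, so this is the set reachable by edges).\<close>

definition orbit :: "nat \<Rightarrow> (nat \<Rightarrow> nat) \<Rightarrow> (nat \<Rightarrow> nat) set" where
  "orbit p u = {y. (sadj p)\<^sup>*\<^sup>* u y}"

text \<open>Number of edges between x and y in the Schreier graph (as a multigraph with loops):
  edges are the pairs (z,i) with i in {1..p}, joining z and e_i(z).\<close>

definition mult :: "nat \<Rightarrow> (nat \<Rightarrow> nat) \<Rightarrow> (nat \<Rightarrow> nat) \<Rightarrow> nat" where
  "mult p x y = card {(z, i). z \<in> {x, y} \<and> i \<in> {1..p} \<and> {z, gen i z} = {x, y}}"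

definition schreier_iso :: "nat \<Rightarrow> (nat \<Rightarrow> nat) \<Rightarrow> (nat \<Rightarrow> nat) \<Rightarrow> bool" where
  "schreier_iso p u v \<longleftrightarrow>
     (\<exists>f. bij_betw f (orbit p u) (orbit p v) \<and>
          (\<forall>x\<in>orbit p u. \<forall>y\<in>orbit p u. mult p (f x) (f y) = mult p x y))"

definition reach_in :: "nat \<Rightarrow> (nat \<Rightarrow> nat) set \<Rightarrow> (nat \<Rightarrow> nat) \<Rightarrow> (nat \<Rightarrow> nat) \<Rightarrow> bool" where
  "reach_in p S = (\<lambda>a b. a \<in> S \<and> b \<in> S \<and> sadj p a b)\<^sup>*\<^sup>*"

definition comp_in :: "nat \<Rightarrow> (nat \<Rightarrow> nat) set \<Rightarrow> (nat \<Rightarrow> nat) \<Rightarrow> (nat \<Rightarrow> nat) set" where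
  "comp_in p S x = {y. reach_in p S x y}"

definition one_ended :: "nat \<Rightarrow> (nat \<Rightarrow> nat) set \<Rightarrow> bool" where
  "one_ended p V \<longleftrightarrow> infinite V \<and>
     (\<forall>K. finite K \<longrightarrow> K \<subseteq> V \<longrightarrow>
        (\<forall>x\<in>V - K. \<forall>y\<in>V - K.
           infinite (comp_in p (V - K) x) \<longrightarrow> infinite (comp_in p (V - K) y) \<longrightarrow>
           reach_in p (V - K) x y))"

definition E1 :: "nat \<Rightarrow> (nat \<Rightarrow> nat) set" where
  "E1 p = {w \<in> Xinf p. one_ended p (orbit p w)}"

text \<open>Decomposition w = 0^k a_1 u_1 a_2 u_2 ... (indices j >= 1 for a and us).
  N_j = k + j + sum_{l<=j} |u_l|; so N_0 = k is the position of a_1 and N_(j-1) that of a_j.\<close>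

definition Npos :: "nat \<Rightarrow> (nat \<Rightarrow> nat list) \<Rightarrow> nat \<Rightarrow> nat" where
  "Npos k us j = k + j + (\<Sum>l=1..j. length (us l))"

definition decomp :: "nat \<Rightarrow> (nat \<Rightarrow> nat) \<Rightarrow> nat \<Rightarrow> (nat \<Rightarrow> nat) \<Rightarrow> (nat \<Rightarrow> nat list) \<Rightarrow> bool" where
  "decomp p w k a us \<longleftrightarrow>
     (\<forall>j\<ge>1. a j \<in> {1..p} \<and> a (Suc j) \<noteq> a j \<and> set (us j) \<subseteq> {0, a j}) \<and>
     (\<forall>n<k. w n = 0) \<and>
     (\<forall>j\<ge>1. w (Npos k us (j - 1)) = a j \<and>
        (\<forall>m<length (us j). w (Npos k us (j - 1) + 1 + m) = us j ! m))"

text \<open>The sequence L^w = (2^(N_j))_{j>=1}, re-indexed from 0: entry n is 2^(N_(n+1)).\<close>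

definition Lseq :: "nat \<Rightarrow> (nat \<Rightarrow> nat list) \<Rightarrow> nat \<Rightarrow> nat" where
  "Lseq k us n = 2 ^ Npos k us (Suc n)"

definition compatible :: "(nat \<Rightarrow> nat) \<Rightarrow> (nat \<Rightarrow> nat) \<Rightarrow> bool" where
  "compatible x y \<longleftrightarrow> (\<exists>l h. \<forall>n. x (l + n) = y (h + n))"

end

theory Submission
  imports Defs
begin

text \<open>Write N_j for the positions of the decomposition of u. The vertex c_j, which is u with
  its first N_(j+1) letters replaced by 0, is where two consecutive cycles of the path of cycles
  meet. Removing it cuts off a finite component containing u: the words that agree with u from
  position N_(j+1) on and whose last nonzero letter before that position is a_(j+1). It has
  sum_(l < N_(j+1)) (p+1)^l vertices. Conversely, a finite component of the graph minus a vertex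
  that contains some c_m is of this form, since otherwise the cycles joining c_m, c_(m+1), ...
  would all lie in it.

  An isomorphism f maps the component of u at c_j to a finite component of the graph of v minus
  f(c_j). For large j this component contains the vertex c'_0 of v, hence is one of the
  components above, and comparing sizes gives N_(j+1) = N'_(m+1) for some m. Doing this in both
  directions, the increasing sequences (N_(j+1)) and (N'_(m+1)) eventually take values in each
  other's range, so they agree after a shift.\<close>

lemma gen_eq_if_nonzero_before: "m < q \<Longrightarrow> x m \<noteq> 0 \<Longrightarrow> gen i x q = x q"
  unfolding gen_def by auto

lemma gen_if_zero_before:
  "\<forall>m<q. x m = 0 \<Longrightarrow> gen i x q = (if x q = 0 then i else if x q = i then 0 else x q)"
  unfolding gen_def by auto

lemma gen_at_first_nonzero:
  assumes "x f \<noteq> 0" and "\<forall>m<f. x m = 0"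
  shows "gen i x = (\<lambda>q. if q < f then i else if q = f \<and> x f = i then 0 else x q)"
proof
  fix q
  show "gen i x q = (if q < f then i else if q = f \<and> x f = i then 0 else x q)"
    using assms gen_eq_if_nonzero_before[of f q x i] gen_if_zero_before[of q x i]
    by (cases q f rule: linorder_cases) auto
qed

lemma gen_le: "i \<le> p \<Longrightarrow> x q \<le> p \<Longrightarrow> gen i x q \<le> p"
  unfolding gen_def by auto

lemma gen_le_inv: "i \<le> p \<Longrightarrow> gen i x q \<le> p \<Longrightarrow> x q \<le> p"
  unfolding gen_def by (auto split: if_splits)

lemma sadj_sym: "sadj p x y \<longleftrightarrow> sadj p y x"
  unfolding sadj_def by auto

lemma sadj_gen: "i \<in> {1..p} \<Longrightarrow> sadj p x (gen i x)"
  unfolding sadj_def by auto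

definition zero_prefix :: "nat \<Rightarrow> (nat \<Rightarrow> nat) \<Rightarrow> nat \<Rightarrow> nat" where
  "zero_prefix n t = (\<lambda>i. if i < n then 0 else t i)"

lemma gen_zero_prefix:
  assumes "t n = c" and "c \<noteq> 0"
  shows "gen c (zero_prefix n t) = (\<lambda>i. if i < n then c else if i = n then 0 else t i)"
  using assms gen_at_first_nonzero[of "zero_prefix n t" n c] by (auto simp: zero_prefix_def)

section \<open>Connectivity inside vertex sets\<close>

lemma reach_in_refl: "reach_in p S x x"
  by (simp add: reach_in_def)

lemma reach_in_edge: "x \<in> S \<Longrightarrow> y \<in> S \<Longrightarrow> sadj p x y \<Longrightarrow> reach_in p S x y"
  by (simp add: reach_in_def r_into_rtranclp)

lemma reach_in_trans: "reach_in p S x y \<Longrightarrow> reach_in p S y z \<Longrightarrow> reach_in p S x z"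
  unfolding reach_in_def by (rule rtranclp_trans)

lemma reach_in_induct [consumes 1, case_names refl step]:
  assumes "reach_in p S x y" and "P x"
    and "\<And>y z. reach_in p S x y \<Longrightarrow> P y \<Longrightarrow> y \<in> S \<Longrightarrow> z \<in> S \<Longrightarrow> sadj p y z \<Longrightarrow> P z"
  shows "P y"
  using assms(1) unfolding reach_in_def
  by (induction rule: rtranclp_induct) (auto simp: reach_in_def intro: assms(2,3))

lemma reach_in_sym: "reach_in p S x y \<Longrightarrow> reach_in p S y x"
proof (induction rule: reach_in_induct)
  case (step y z)
  then have "reach_in p S z y" by (simp add: reach_in_edge sadj_sym)
  then show ?case using step.IH by (rule reach_in_trans)
qed (rule reach_in_refl)

lemma reach_in_mono: "reach_in p S x y \<Longrightarrow> S \<subseteq> T \<Longrightarrow> reach_in p T x y"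
proof (induction rule: reach_in_induct)
  case (step y z)
  then show ?case using reach_in_edge[of y T z] reach_in_trans by blast
qed (rule reach_in_refl)

lemma comp_in_subset: "comp_in p S x \<subseteq> insert x S"
proof
  fix y
  assume "y \<in> comp_in p S x"
  then have "reach_in p S x y" by (simp add: comp_in_def)
  then show "y \<in> insert x S" by (induction rule: reach_in_induct) auto
qed

lemma comp_in_eq: "reach_in p S x y \<Longrightarrow> comp_in p S x = comp_in p S y"
  unfolding comp_in_def by (blast intro: reach_in_trans reach_in_sym)

definition connected_in :: "nat \<Rightarrow> (nat \<Rightarrow> nat) set \<Rightarrow> bool" where
  "connected_in p S \<longleftrightarrow> (\<forall>x\<in>S. \<forall>y\<in>S. reach_in p S x y)"

lemma connected_in_reach_in:
  "connected_in p S \<Longrightarrow> x \<in> S \<Longrightarrow> y \<in> S \<Longrightarrow> S \<subseteq> T \<Longrightarrow> reach_in p T x y"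
  unfolding connected_in_def using reach_in_mono by blast

lemma connected_in_Un:
  assumes S: "connected_in p S" and T: "connected_in p T"
    and "x \<in> S" and "y \<in> T" and "sadj p x y"
  shows "connected_in p (S \<union> T)"
proof -
  have ST: "reach_in p (S \<union> T) x' y'" if "x' \<in> S" "y' \<in> T" for x' y'
  proof -
    have "reach_in p (S \<union> T) x' x" "reach_in p (S \<union> T) y y'"
      using S T that assms(3,4) by (auto intro: connected_in_reach_in)
    moreover have "reach_in p (S \<union> T) x y" using assms(3-5) by (simp add: reach_in_edge)
    ultimately show ?thesis by (meson reach_in_trans)
  qed
  show ?thesis
    unfolding connected_in_def
  proof (intro ballI)
    fix x' y'
    assume "x' \<in> S \<union> T" "y' \<in> S \<union> T"
    then consider "x' \<in> S" "y' \<in> S" | "x' \<in> S" "y' \<in> T" | "x' \<in> T" "y' \<in> S" | "x' \<in> T" "y' \<in> T"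
      by blast
    then show "reach_in p (S \<union> T) x' y'"
      by cases (auto intro: connected_in_reach_in[OF S] connected_in_reach_in[OF T] ST
          reach_in_sym[OF ST])
  qed
qed

lemma connected_in_UN:
  assumes conn: "\<And>c. c \<in> I \<Longrightarrow> connected_in p (S c)" and "c0 \<in> I"
    and edge: "\<And>c. c \<in> I \<Longrightarrow> c \<noteq> c0 \<Longrightarrow> \<exists>x\<in>S c. \<exists>y\<in>S c0. sadj p x y"
  shows "connected_in p (\<Union>c\<in>I. S c)"
proof -
  let ?U = "\<Union>c\<in>I. S c"
  have in_c0: "reach_in p ?U y y'" if "y \<in> S c0" "y' \<in> S c0" for y y'
    using conn[OF \<open>c0 \<in> I\<close>] that \<open>c0 \<in> I\<close> by (auto intro: connected_in_reach_in)
  have to_c0: "\<exists>y\<in>S c0. reach_in p ?U x y" if c: "c \<in> I" and x: "x \<in> S c" for c x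
  proof (cases "c = c0")
    case True
    with x show ?thesis using reach_in_refl by blast
  next
    case False
    then obtain x' y where "x' \<in> S c" "y \<in> S c0" "sadj p x' y" using edge c by blast
    moreover have "reach_in p ?U x x'"
      using conn c x \<open>x' \<in> S c\<close> by (auto intro: connected_in_reach_in)
    moreover have "reach_in p ?U x' y"
      using c \<open>c0 \<in> I\<close> \<open>x' \<in> S c\<close> \<open>y \<in> S c0\<close> \<open>sadj p x' y\<close> by (auto intro: reach_in_edge)
    ultimately show ?thesis by (meson reach_in_trans)
  qed
  show ?thesis
    unfolding connected_in_def
  proof (intro ballI)
    fix x y
    assume "x \<in> ?U" "y \<in> ?U"
    then obtain x0 y0 where "x0 \<in> S c0" "reach_in p ?U x x0" "y0 \<in> S c0" "reach_in p ?U y y0"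
      using to_c0 by blast
    then show "reach_in p ?U x y"
      by (meson in_c0 reach_in_sym reach_in_trans)
  qed
qed

lemma orbit_closed: "x \<in> orbit p u \<Longrightarrow> sadj p x y \<Longrightarrow> y \<in> orbit p u"
  unfolding orbit_def by (auto intro: rtranclp.rtrancl_into_rtrancl)

lemma self_mem_orbit: "u \<in> orbit p u"
  by (simp add: orbit_def)

lemma reach_in_orbit:
  assumes "reach_in p S x y" and "x \<in> orbit p u"
  shows "y \<in> orbit p u \<and> reach_in p (S \<inter> orbit p u) x y"
  using assms
proof (induction rule: reach_in_induct)
  case refl
  then show ?case by (simp add: reach_in_refl)
next
  case (step y z)
  then have "z \<in> orbit p u" using orbit_closed by blast
  with step have "reach_in p (S \<inter> orbit p u) y z" by (simp add: reach_in_edge)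
  with step \<open>z \<in> orbit p u\<close> show ?case using reach_in_trans by blast
qed

section \<open>The binary odometer\<close>

text \<open>On words with prefix in {0,b}^n, e_b acts as adding 1 to a binary counter of n digits,
  least significant digit first, where the letter 0 stands for the digit 1.\<close>

definition counter_word :: "nat \<Rightarrow> nat \<Rightarrow> (nat \<Rightarrow> nat) \<Rightarrow> nat \<Rightarrow> nat \<Rightarrow> nat" where
  "counter_word n b t v = (\<lambda>i. if i < n then (if bit v i then 0 else b) else t i)"

lemma all_low_bits_iff: "(\<forall>m<q. bit (v::nat) m) \<longleftrightarrow> v mod 2^q = 2^q - 1"
proof -
  have "(\<forall>m<q. bit v m) \<longleftrightarrow> take_bit q v = mask q"
    by (auto simp: bit_eq_iff bit_take_bit_iff bit_mask_iff)
  then show ?thesis by (simp add: take_bit_eq_mod mask_eq_exp_minus_1)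
qed

lemma bit_Suc_carry: "bit (Suc v) q \<longleftrightarrow> (bit v q \<noteq> (\<forall>m<q. bit (v::nat) m))"
proof -
  have v: "Suc v = 2^q * (v div 2^q) + (v mod 2^q + 1)" by simp
  have "v mod 2^q < 2^q" by simp
  then consider "v mod 2^q + 1 = 2^q" | "v mod 2^q + 1 < 2^q" by linarith
  then have "Suc v div 2^q = v div 2^q + (if \<forall>m<q. bit v m then 1 else 0)"
  proof cases
    case 1
    then have "Suc v = 2^q * (v div 2^q + 1)" using v by simp
    then show ?thesis using 1 all_low_bits_iff[of q v] by simp
  next
    case 2
    have "Suc v div 2^q = v div 2^q + (v mod 2^q + 1) div 2^q"
      using v by (metis add.commute div_mult_self2 power_not_zero zero_neq_numeral)
    then have "Suc v div 2^q = v div 2^q" using 2 by simp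
    then show ?thesis using 2 all_low_bits_iff[of q v] by auto
  qed
  then show ?thesis
    unfolding bit_iff_odd[of "Suc v"] bit_iff_odd[of v q] by (cases "\<forall>m<q. bit v m") auto
qed

lemma gen_counter_word_Suc:
  assumes "b \<noteq> 0" and "Suc v < 2^n"
  shows "gen b (counter_word n b t v) = counter_word n b t (Suc v)"
proof
  fix q
  have "\<exists>m<n. \<not> bit v m"
  proof (rule ccontr)
    assume "\<not> ?thesis"
    then have "v mod 2^n = 2^n - 1" using all_low_bits_iff by blast
    then show False using assms(2) by simp
  qed
  show "gen b (counter_word n b t v) q = counter_word n b t (Suc v) q"
  proof (cases "\<forall>m<q. bit v m")
    case True
    with \<open>\<exists>m<n. \<not> bit v m\<close> have "q < n" by (meson order.strict_trans1 not_le)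
    with True show ?thesis
      using gen_if_zero_before[of q "counter_word n b t v" b] bit_Suc_carry[of v q] assms(1)
      by (auto simp: counter_word_def)
  next
    case False
    then obtain m where "m < q" "m < n" "\<not> bit v m"
      using \<open>\<exists>m<n. \<not> bit v m\<close> by (metis not_less_iff_gr_or_eq order.strict_trans)
    then have "gen b (counter_word n b t v) q = counter_word n b t v q"
      using assms(1) by (intro gen_eq_if_nonzero_before) (auto simp: counter_word_def)
    with False show ?thesis by (simp add: counter_word_def bit_Suc_carry)
  qed
qed

lemma bit_exp_minus_1_nat: "bit (2^n - 1 :: nat) i \<longleftrightarrow> i < n"
proof -
  have "(2^n - 1 :: nat) = mask n" by (simp add: mask_eq_exp_minus_1)
  then show ?thesis by (simp only:) (simp add: bit_mask_iff)
qed

lemma counter_word_top: "counter_word n b t (2^n - 1) = zero_prefix n t"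
  unfolding counter_word_def zero_prefix_def bit_exp_minus_1_nat by auto

lemma gen_zero_prefix_eq_counter_word_0:
  assumes "t n \<noteq> 0" and "t n \<noteq> b"
  shows "gen b (zero_prefix n t) = counter_word n b t 0"
  using assms gen_at_first_nonzero[of "zero_prefix n t" n b]
  by (auto simp: zero_prefix_def counter_word_def)

lemma counter_word_inj:
  assumes "b \<noteq> 0" and "v < 2^n" and "v' < 2^n"
    and "counter_word n b t v = counter_word n b t v'"
  shows "v = v'"
proof -
  have "take_bit n v = take_bit n v'"
  proof (rule bit_eqI)
    fix i
    show "bit (take_bit n v) i \<longleftrightarrow> bit (take_bit n v') i"
      using fun_cong[OF assms(4), of i] assms(1)
      by (auto simp: bit_take_bit_iff counter_word_def split: if_splits)
  qed
  with assms(2,3) show ?thesis by (simp add: take_bit_nat_eq_self)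
qed

lemma counter_word_surj:
  assumes "\<forall>i<n. x i = 0 \<or> x i = b" and "\<forall>i\<ge>n. x i = t i"
  shows "\<exists>v<2^n. x = counter_word n b t v"
proof -
  have "\<exists>v. x = counter_word n b t v" using assms
  proof (induction n arbitrary: t)
    case 0
    then have "x = counter_word 0 b t 0" by (auto simp: counter_word_def)
    then show ?case ..
  next
    case (Suc n)
    have "\<forall>i<n. x i = 0 \<or> x i = b" using Suc.prems(1) by simp
    moreover have "\<forall>i\<ge>n. x i = (t(n := x n)) i"
      using Suc.prems(2) by (metis Suc_leI fun_upd_apply le_neq_implies_less)
    ultimately obtain v where v: "x = counter_word n b (t(n := x n)) v"
      using Suc.IH by blast
    let ?v = "if x n = 0 then set_bit n v else unset_bit n v"
    have "x = counter_word (Suc n) b t ?v"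
    proof
      fix i
      show "x i = counter_word (Suc n) b t ?v i"
        using fun_cong[OF v, of i] Suc.prems
        by (cases i n rule: linorder_cases)
          (auto simp: counter_word_def bit_set_bit_iff bit_unset_bit_iff)
    qed
    then show ?case ..
  qed
  then obtain v where "x = counter_word n b t v" by blast
  moreover have "counter_word n b t v = counter_word n b t (take_bit n v)"
    by (auto simp: counter_word_def bit_take_bit_iff)
  ultimately show ?thesis using take_bit_nat_less_exp by metis
qed

lemma reach_in_counter_word:
  assumes "b \<in> {1..p}" and "v \<le> v'" and "v' < 2^n"
    and "\<forall>w\<in>{v..v'}. counter_word n b t w \<in> S"
  shows "reach_in p S (counter_word n b t v) (counter_word n b t v')"
  using assms(2-4)
proof (induction v' rule: dec_induct)
  case base
  show ?case by (rule reach_in_refl)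
next
  case (step w)
  have "gen b (counter_word n b t w) = counter_word n b t (Suc w)"
    using assms(1) step.prems by (intro gen_counter_word_Suc) auto
  then have "sadj p (counter_word n b t w) (counter_word n b t (Suc w))"
    using sadj_gen[OF assms(1)] by metis
  then have "reach_in p S (counter_word n b t w) (counter_word n b t (Suc w))"
    using step.prems step.hyps by (intro reach_in_edge) auto
  with step show ?case using reach_in_trans by simp
qed

section \<open>Branches of the Schreier graph\<close>

definition cylinder :: "nat \<Rightarrow> nat \<Rightarrow> (nat \<Rightarrow> nat) \<Rightarrow> (nat \<Rightarrow> nat) set" where
  "cylinder p n t = {w. (\<forall>i<n. w i \<le> p) \<and> (\<forall>i\<ge>n. w i = t i)}"

definition last_nonzero_below :: "(nat \<Rightarrow> nat) \<Rightarrow> nat \<Rightarrow> nat \<Rightarrow> bool" where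
  "last_nonzero_below w n a \<longleftrightarrow> (\<exists>l<n. w l = a \<and> (\<forall>i. l < i \<and> i < n \<longrightarrow> w i = 0))"

text \<open>If t n \<notin> {0, a}, this is a connected component of the Schreier graph with the vertex
  zero_prefix n t removed.\<close>

definition branch :: "nat \<Rightarrow> nat \<Rightarrow> nat \<Rightarrow> (nat \<Rightarrow> nat) \<Rightarrow> (nat \<Rightarrow> nat) set" where
  "branch p n a t = {w \<in> cylinder p n t. last_nonzero_below w n a}"

lemma mem_cylinder_upd: "w \<in> cylinder p n (t(n := c)) \<Longrightarrow> w n = c"
  by (simp add: cylinder_def)

lemma all_ge_Suc_iff: "(\<forall>i\<ge>n. P i) \<longleftrightarrow> P n \<and> (\<forall>i\<ge>Suc n. P i)"
  by (metis Suc_le_eq le_neq_implies_less order.refl Suc_leD)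

lemma mem_cylinder_Suc:
  "w \<in> cylinder p (Suc n) t \<longleftrightarrow> w n \<le> p \<and> w \<in> cylinder p n (t(n := w n))"
  unfolding cylinder_def mem_Collect_eq All_less_Suc all_ge_Suc_iff[of n] by auto

lemma cylinder_Suc: "cylinder p (Suc n) t = (\<Union>c\<in>{..p}. cylinder p n (t(n := c)))"
  using mem_cylinder_Suc mem_cylinder_upd by fastforce

lemma cylinder_finite_card: "finite (cylinder p n t) \<and> card (cylinder p n t) = (p + 1)^n"
proof (induction n arbitrary: t)
  case 0
  have "cylinder p 0 t = {t}" by (auto simp: cylinder_def)
  then show ?case by simp
next
  case (Suc n)
  have "card (\<Union>c\<in>{..p}. cylinder p n (t(n := c))) = (\<Sum>c\<in>{..p}. card (cylinder p n (t(n := c))))"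
    using Suc.IH mem_cylinder_upd by (intro card_UN_disjoint) blast+
  then show ?case using Suc.IH by (simp add: cylinder_Suc)
qed

lemma last_nonzero_below_Suc:
  "last_nonzero_below w (Suc n) a \<longleftrightarrow> w n = a \<or> (w n = 0 \<and> last_nonzero_below w n a)"
proof
  assume "last_nonzero_below w (Suc n) a"
  then obtain l where l: "l < Suc n" "w l = a" "\<forall>i. l < i \<and> i < Suc n \<longrightarrow> w i = 0"
    unfolding last_nonzero_below_def by blast
  show "w n = a \<or> (w n = 0 \<and> last_nonzero_below w n a)"
  proof (cases "l = n")
    case False
    then have "w n = 0" using l by simp
    moreover have "last_nonzero_below w n a"
      unfolding last_nonzero_below_def using l False by (intro exI[of _ l]) simp
    ultimately show ?thesis by blast
  qed (use l in simp)
next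
  assume "w n = a \<or> (w n = 0 \<and> last_nonzero_below w n a)"
  then show "last_nonzero_below w (Suc n) a"
    unfolding last_nonzero_below_def by (auto simp: less_Suc_eq)
qed

lemma last_nonzero_below_intro:
  assumes "l < n" and "w l = a" and "\<forall>i. l < i \<and> i < n \<longrightarrow> w i = 0 \<or> w i = a"
  shows "last_nonzero_below w n a"
  using assms
proof (induction n)
  case (Suc n)
  show ?case
  proof (cases "l = n")
    case True
    with Suc.prems show ?thesis by (simp add: last_nonzero_below_Suc)
  next
    case False
    with Suc have "last_nonzero_below w n a" by simp
    moreover have "w n = 0 \<or> w n = a" using Suc.prems False by simp
    ultimately show ?thesis by (auto simp: last_nonzero_below_Suc)
  qed
qed simp

lemma branch_Suc:
  assumes "a \<noteq> 0" and "a \<le> p"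
  shows "branch p (Suc n) a t = branch p n a (t(n := 0)) \<union> cylinder p n (t(n := a))"
proof (intro set_eqI)
  fix w
  show "w \<in> branch p (Suc n) a t \<longleftrightarrow> w \<in> branch p n a (t(n := 0)) \<union> cylinder p n (t(n := a))"
    using assms
    by (cases "w n = 0"; cases "w n = a")
      (auto simp: branch_def mem_cylinder_Suc last_nonzero_below_Suc dest: mem_cylinder_upd)
qed

lemma branch_finite_card:
  assumes "a \<noteq> 0" and "a \<le> p"
  shows "finite (branch p n a t) \<and> card (branch p n a t) = (\<Sum>l<n. (p + 1)^l)"
proof (induction n arbitrary: t)
  case 0
  then show ?case by (simp add: branch_def last_nonzero_below_def)
next
  case (Suc n)
  have "branch p n a (t(n := 0)) \<inter> cylinder p n (t(n := a)) = {}"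
    using assms by (auto simp: branch_def dest!: mem_cylinder_upd)
  then show ?case
    using Suc.IH cylinder_finite_card by (simp add: branch_Suc[OF assms] card_Un_disjoint)
qed

lemma first_nonzero_exists:
  fixes x :: "nat \<Rightarrow> nat"
  assumes "x q \<noteq> 0"
  obtains f where "f \<le> q" and "x f \<noteq> 0" and "\<forall>m<f. x m = 0"
proof
  show "(LEAST m. x m \<noteq> 0) \<le> q" using assms by (rule Least_le)
  show "x (LEAST m. x m \<noteq> 0) \<noteq> 0" using assms by (rule LeastI)
  show "\<forall>m<(LEAST m. x m \<noteq> 0). x m = 0" using not_less_Least by blast
qed

lemma last_nonzero_below_gen:
  assumes lnz: "last_nonzero_below x n a" and "a \<noteq> 0"
  shows "last_nonzero_below (gen i x) n a \<or> (\<forall>q<n. gen i x q = 0)"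
proof -
  obtain l where l: "l < n" "x l = a" "\<forall>q. l < q \<and> q < n \<longrightarrow> x q = 0"
    using lnz unfolding last_nonzero_below_def by blast
  obtain f where f: "f \<le> l" "x f \<noteq> 0" "\<forall>m<f. x m = 0"
    using first_nonzero_exists[of x l] l(2) \<open>a \<noteq> 0\<close> by metis
  have y: "gen i x = (\<lambda>q. if q < f then i else if q = f \<and> x f = i then 0 else x q)"
    using gen_at_first_nonzero f(2,3) .
  consider "f \<noteq> l \<or> a \<noteq> i" | "f = l" "a = i" "0 < l" | "f = l" "a = i" "l = 0" by blast
  then show ?thesis
  proof cases
    case 1
    then have "last_nonzero_below (gen i x) n a"
      unfolding last_nonzero_below_def y using l f(1) by (intro exI[of _ l]) auto
    then show ?thesis ..
  next
    case 2
    then have "last_nonzero_below (gen i x) n a"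
      unfolding last_nonzero_below_def y using l by (intro exI[of _ "l - 1"]) auto
    then show ?thesis ..
  next
    case 3
    then show ?thesis unfolding y using l by auto
  qed
qed

lemma last_nonzero_below_gen_inv:
  assumes lnz: "last_nonzero_below (gen i y) n a" and "a \<noteq> 0"
    and "q < n" and "y q \<noteq> 0"
  shows "last_nonzero_below y n a"
proof -
  obtain f where f: "f \<le> q" "y f \<noteq> 0" "\<forall>m<f. y m = 0"
    using first_nonzero_exists[of y q] \<open>y q \<noteq> 0\<close> by metis
  have x: "gen i y = (\<lambda>q. if q < f then i else if q = f \<and> y f = i then 0 else y q)"
    using gen_at_first_nonzero f(2,3) .
  obtain l where l: "l < n" "gen i y l = a" "\<forall>q. l < q \<and> q < n \<longrightarrow> gen i y q = 0"
    using lnz unfolding last_nonzero_below_def by blast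
  show ?thesis
  proof (cases "f \<le> l")
    case True
    then show ?thesis
      unfolding last_nonzero_below_def using l \<open>a \<noteq> 0\<close>
      by (intro exI[of _ l]) (auto simp: x split: if_splits)
  next
    case False
    then have "gen i y f = 0" using l(3) \<open>f \<le> q\<close> \<open>q < n\<close> by simp
    then have "y f = i" using f(2) by (simp add: x split: if_splits)
    moreover have "a = i" using l(2) False by (simp add: x)
    moreover have "y r = 0" if "f < r" "r < n" for r
      using l(3)[rule_format, of r] that False by (simp add: x)
    ultimately show ?thesis
      unfolding last_nonzero_below_def using \<open>f \<le> q\<close> \<open>q < n\<close> by (intro exI[of _ f]) auto
  qed
qed

lemma gen_mem_branch:
  assumes x: "x \<in> branch p n a t" and "a \<noteq> 0" and "i \<le> p"
  shows "gen i x \<in> branch p n a t \<or> gen i x = zero_prefix n t"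
proof -
  obtain l where "l < n" "x l \<noteq> 0"
    using x \<open>a \<noteq> 0\<close> unfolding branch_def last_nonzero_below_def by blast
  then have "\<forall>q\<ge>n. gen i x q = t q"
    using x gen_eq_if_nonzero_before[of l _ x i] by (auto simp: branch_def cylinder_def)
  moreover have "\<forall>q<n. gen i x q \<le> p"
    using x \<open>i \<le> p\<close> gen_le by (auto simp: branch_def cylinder_def)
  moreover have "last_nonzero_below (gen i x) n a \<or> (\<forall>q<n. gen i x q = 0)"
    using x \<open>a \<noteq> 0\<close> last_nonzero_below_gen by (auto simp: branch_def)
  ultimately show ?thesis by (auto simp: branch_def cylinder_def zero_prefix_def)
qed

lemma mem_branch_gen_inv:
  assumes x: "gen i y \<in> branch p n a t" and "a \<noteq> 0" and "i \<le> p"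
    and "t n \<noteq> 0" and "t n \<noteq> a"
  shows "y \<in> branch p n a t \<or> y = zero_prefix n t"
proof (cases "\<exists>q<n. y q \<noteq> 0")
  case True
  then obtain q where "q < n" "y q \<noteq> 0" by blast
  then have "\<forall>r\<ge>n. y r = t r"
    using x gen_eq_if_nonzero_before[of q _ y i] by (auto simp: branch_def cylinder_def)
  moreover have "\<forall>r<n. y r \<le> p"
    using x \<open>i \<le> p\<close> gen_le_inv by (auto simp: branch_def cylinder_def)
  moreover have "last_nonzero_below y n a"
    using x \<open>a \<noteq> 0\<close> \<open>q < n\<close> \<open>y q \<noteq> 0\<close> last_nonzero_below_gen_inv by (auto simp: branch_def)
  ultimately show ?thesis by (auto simp: branch_def cylinder_def)
next
  case False
  then have zero: "\<forall>q<n. y q = 0" by blast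
  then have "\<forall>q<n. gen i y q = i" by (simp add: gen_if_zero_before)
  moreover obtain l where "l < n" "gen i y l = a"
    using x unfolding branch_def last_nonzero_below_def by blast
  ultimately have "a = i" by simp
  have "gen i y n = t n" using x by (simp add: branch_def cylinder_def)
  then have "y n = t n"
    using gen_if_zero_before[OF zero, of i] \<open>a = i\<close> assms(4,5) by (auto split: if_splits)
  then have "\<forall>r>n. y r = t r"
    using x assms(4) gen_eq_if_nonzero_before[of n _ y i] by (auto simp: branch_def cylinder_def)
  with zero \<open>y n = t n\<close> have "y = zero_prefix n t"
    by (auto simp: zero_prefix_def fun_eq_iff not_less le_less)
  then show ?thesis ..
qed

lemma branch_neighbour:
  assumes "x \<in> branch p n a t" and "a \<noteq> 0" and "t n \<noteq> 0" and "t n \<noteq> a" and "sadj p x y"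
  shows "y \<in> branch p n a t \<or> y = zero_prefix n t"
proof -
  obtain i where "i \<le> p" and "y = gen i x \<or> x = gen i y"
    using \<open>sadj p x y\<close> unfolding sadj_def by auto
  then show ?thesis
    using assms(1-4) gen_mem_branch[of x p n a t i] mem_branch_gen_inv[of i y p n a t] by blast
qed

lemma connected_cylinder: "connected_in p (cylinder p n t)"
proof (induction n arbitrary: t)
  case 0
  have "cylinder p 0 t = {t}" by (auto simp: cylinder_def)
  then show ?case by (simp add: connected_in_def reach_in_refl)
next
  case (Suc n)
  have "\<exists>x\<in>cylinder p n (t(n := c)). \<exists>y\<in>cylinder p n (t(n := 0)). sadj p x y"
    if "c \<in> {..p}" "c \<noteq> 0" for c
  proof (intro bexI)
    let ?x = "zero_prefix n (t(n := c))"
    show "sadj p ?x (gen c ?x)" using that by (intro sadj_gen) auto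
    show "?x \<in> cylinder p n (t(n := c))" by (simp add: cylinder_def zero_prefix_def)
    show "gen c ?x \<in> cylinder p n (t(n := 0))"
      using that by (simp add: gen_zero_prefix cylinder_def)
  qed
  then show ?case unfolding cylinder_Suc by (intro connected_in_UN Suc.IH) auto
qed

lemma connected_branch:
  assumes "a \<noteq> 0" and "a \<le> p"
  shows "connected_in p (branch p n a t)"
proof (induction n arbitrary: t)
  case 0
  then show ?case by (simp add: connected_in_def branch_def last_nonzero_below_def)
next
  case (Suc n)
  show ?case
  proof (cases "n = 0")
    case True
    then have "branch p n a (t(n := 0)) = {}" by (simp add: branch_def last_nonzero_below_def)
    then show ?thesis using connected_cylinder by (simp add: branch_Suc[OF assms])
  next
    case False
    let ?z = "zero_prefix n (t(n := a))"
    have "gen a ?z \<in> branch p n a (t(n := 0))"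
      using assms False
      by (auto simp: gen_zero_prefix branch_def cylinder_def
          intro!: last_nonzero_below_intro[of "n - 1"])
    moreover have "?z \<in> cylinder p n (t(n := a))" by (simp add: cylinder_def zero_prefix_def)
    moreover have "sadj p (gen a ?z) ?z" using assms by (simp add: sadj_sym sadj_gen)
    ultimately show ?thesis
      unfolding branch_Suc[OF assms] by (intro connected_in_Un Suc.IH connected_cylinder)
  qed
qed

section \<open>Isomorphisms of Schreier graphs\<close>

definition adj_iso ::
    "nat \<Rightarrow> ((nat \<Rightarrow> nat) \<Rightarrow> nat \<Rightarrow> nat) \<Rightarrow> (nat \<Rightarrow> nat) set \<Rightarrow> (nat \<Rightarrow> nat) set \<Rightarrow> bool"
  where
  "adj_iso p f V W \<longleftrightarrow> bij_betw f V W \<and> (\<forall>x\<in>V. \<forall>y\<in>V. sadj p (f x) (f y) \<longleftrightarrow> sadj p x y)"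

lemma mult_eq_0_iff: "mult p x y = 0 \<longleftrightarrow> \<not> sadj p x y"
proof -
  let ?E = "{(z, i). z \<in> {x, y} \<and> i \<in> {1..p} \<and> {z, gen i z} = {x, y}}"
  have fin: "finite ?E" by (rule finite_subset[of _ "{x, y} \<times> {1..p}"]) auto
  have nonempty: "?E \<noteq> {} \<longleftrightarrow> sadj p x y"
  proof
    assume "?E \<noteq> {}"
    then obtain z i where "z \<in> {x, y}" "i \<in> {1..p}" "{z, gen i z} = {x, y}" by auto
    then have "y = gen i x \<or> x = gen i y" by (auto simp: doubleton_eq_iff)
    with \<open>i \<in> {1..p}\<close> show "sadj p x y" unfolding sadj_def by blast
  next
    assume "sadj p x y"
    then obtain i where "i \<in> {1..p}" "y = gen i x \<or> x = gen i y" unfolding sadj_def by blast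
    then have "(x, i) \<in> ?E \<or> (y, i) \<in> ?E" by auto
    then show "?E \<noteq> {}" by blast
  qed
  have "mult p x y = 0 \<longleftrightarrow> ?E = {}" unfolding mult_def by (rule card_0_eq[OF fin])
  with nonempty show ?thesis by blast
qed

lemma schreier_iso_imp_adj_iso:
  "schreier_iso p u v \<Longrightarrow> \<exists>f. adj_iso p f (orbit p u) (orbit p v)"
  unfolding schreier_iso_def adj_iso_def by (metis mult_eq_0_iff)

lemma adj_iso_inv:
  assumes "adj_iso p f V W"
  shows "adj_iso p (inv_into V f) W V"
proof -
  have f: "bij_betw f V W" using assms by (simp add: adj_iso_def)
  have "sadj p (inv_into V f x) (inv_into V f y) \<longleftrightarrow> sadj p x y" if "x \<in> W" "y \<in> W" for x y
    using assms that bij_betw_inv_into_right[OF f] bij_betwE[OF bij_betw_inv_into[OF f]]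
    unfolding adj_iso_def by metis
  then show ?thesis using bij_betw_inv_into[OF f] by (simp add: adj_iso_def)
qed

lemma reach_in_image:
  assumes "adj_iso p f V W" and "S \<subseteq> V" and "reach_in p S x y"
  shows "reach_in p (f ` S) (f x) (f y)"
  using assms(3)
proof (induction rule: reach_in_induct)
  case (step y z)
  then have "reach_in p (f ` S) (f y) (f z)"
    using assms(1,2) by (intro reach_in_edge) (auto simp: adj_iso_def)
  with step.IH show ?case by (rule reach_in_trans)
qed (rule reach_in_refl)

lemma comp_in_image:
  assumes f: "adj_iso p f V W" and "S \<subseteq> V" and "x \<in> V"
  shows "f ` comp_in p S x = comp_in p (f ` S) (f x)"
proof
  show "f ` comp_in p S x \<subseteq> comp_in p (f ` S) (f x)"
    using reach_in_image[OF f \<open>S \<subseteq> V\<close>] by (auto simp: comp_in_def)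
next
  let ?g = "inv_into V f"
  have bij: "bij_betw f V W" using f by (simp add: adj_iso_def)
  have fS: "f ` S \<subseteq> W" and fx: "f x \<in> W"
    using bij \<open>S \<subseteq> V\<close> \<open>x \<in> V\<close> bij_betw_imp_surj_on by blast+
  have gS: "?g ` f ` S = S" and gx: "?g (f x) = x"
    using bij \<open>S \<subseteq> V\<close> \<open>x \<in> V\<close>
    by (auto simp: bij_betw_def inv_into_image_cancel)
  show "comp_in p (f ` S) (f x) \<subseteq> f ` comp_in p S x"
  proof
    fix z
    assume z: "z \<in> comp_in p (f ` S) (f x)"
    then have "z \<in> W" using comp_in_subset fS fx by blast
    have "reach_in p S x (?g z)"
      using reach_in_image[OF adj_iso_inv[OF f] fS] z gS gx by (force simp: comp_in_def)
    then have "?g z \<in> comp_in p S x" by (simp add: comp_in_def)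
    then show "z \<in> f ` comp_in p S x"
      using bij_betw_inv_into_right[OF bij \<open>z \<in> W\<close>] by (metis image_eqI)
  qed
qed

lemma comp_in_remove_image:
  assumes f: "adj_iso p f V W" and "c \<in> V" and "x \<in> V"
  shows "f ` comp_in p (V - {c}) x = comp_in p (W - {f c}) (f x)"
proof -
  have bij: "bij_betw f V W" using f by (simp add: adj_iso_def)
  then have "f ` (V - {c}) = W - {f c}"
    using \<open>c \<in> V\<close> inj_on_image_set_diff[of f V V "{c}"] by (simp add: bij_betw_def)
  with comp_in_image[OF f _ \<open>x \<in> V\<close>, of "V - {c}"] show ?thesis by simp
qed

section \<open>The lobes of a word with a decomposition\<close>

locale decomposed_word =
  fixes p :: nat and u :: "nat \<Rightarrow> nat"
    and k :: nat and a :: "nat \<Rightarrow> nat" and us :: "nat \<Rightarrow> nat list"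
  assumes decomp: "decomp p u k a us" and word: "u \<in> Xinf p"
begin

abbreviation N :: "nat \<Rightarrow> nat" where "N \<equiv> Npos k us"

abbreviation V :: "(nat \<Rightarrow> nat) set" where "V \<equiv> orbit p u"

lemma strict_mono_N: "strict_mono N"
  unfolding strict_mono_Suc_iff by (simp add: Npos_def)

lemma letter_le: "u i \<le> p"
  using word by (simp add: Xinf_def)

lemma decomp_Suc:
  shows "a (Suc j) \<in> {1..p}" and "a (Suc (Suc j)) \<noteq> a (Suc j)"
    and "set (us (Suc j)) \<subseteq> {0, a (Suc j)}" and "u (N j) = a (Suc j)"
    and "\<forall>m<length (us (Suc j)). u (N j + 1 + m) = us (Suc j) ! m"
  using decomp unfolding decomp_def by (fastforce dest: spec[of _ "Suc j"])+

lemma u_between_N: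
  assumes "N j < i" and "i < N (Suc j)"
  shows "u i = 0 \<or> u i = a (Suc j)"
proof -
  define m where "m = i - N j - 1"
  have "i = N j + 1 + m" and "m < length (us (Suc j))"
    using assms by (auto simp: m_def Npos_def)
  then have "u i \<in> set (us (Suc j))" using decomp_Suc(5) by auto
  then show ?thesis using decomp_Suc(3) by blast
qed

text \<open>In the path of cycles of u, the cycles of lengths 2^N (Suc j) and 2^N (Suc (Suc j)) meet in
  cut_vertex j; removing it cuts off the finite component lobe j, which contains u.\<close>

definition cut_vertex :: "nat \<Rightarrow> nat \<Rightarrow> nat" where
  "cut_vertex j = zero_prefix (N (Suc j)) u"

definition lobe :: "nat \<Rightarrow> (nat \<Rightarrow> nat) set" where
  "lobe j = branch p (N (Suc j)) (a (Suc j)) u"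

lemma mem_lobe:
  assumes "\<forall>i<N (Suc j). w i \<le> p" and "\<forall>i\<ge>N j. w i = u i"
  shows "w \<in> lobe j"
proof -
  have "last_nonzero_below w (N (Suc j)) (a (Suc j))"
    using assms(2) decomp_Suc(4) u_between_N strict_monoD[OF strict_mono_N, of j "Suc j"]
    by (intro last_nonzero_below_intro[of "N j"]) auto
  moreover have "\<forall>i\<ge>N (Suc j). w i = u i"
    using assms(2) strict_monoD[OF strict_mono_N, of j "Suc j"] by simp
  ultimately show ?thesis using assms(1) by (simp add: lobe_def branch_def cylinder_def)
qed

lemma self_mem_lobe: "u \<in> lobe j"
  by (rule mem_lobe) (simp_all add: letter_le)

lemma cut_vertex_mem_lobe: "j < j' \<Longrightarrow> cut_vertex j \<in> lobe j'"
  using strict_mono_less_eq[OF strict_mono_N, of "Suc j" j']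
  by (intro mem_lobe) (auto simp: cut_vertex_def zero_prefix_def letter_le)

lemma cut_vertex_not_mem_lobe: "cut_vertex j \<notin> lobe j"
  using decomp_Suc(1)[of j]
  by (auto simp: lobe_def branch_def last_nonzero_below_def cut_vertex_def zero_prefix_def)

lemma inj_cut_vertex: "inj cut_vertex"
proof (rule injI)
  have "cut_vertex j \<noteq> cut_vertex j'" if "j < j'" for j j'
  proof -
    have "cut_vertex j' (N (Suc j)) = 0"
      using that strict_monoD[OF strict_mono_N] by (simp add: cut_vertex_def zero_prefix_def)
    moreover have "cut_vertex j (N (Suc j)) \<noteq> 0"
      using decomp_Suc(1,4)[of "Suc j"] by (simp add: cut_vertex_def zero_prefix_def)
    ultimately show ?thesis by metis
  qed
  then show "cut_vertex j = cut_vertex j' \<Longrightarrow> j = j'" for j j'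
    by (metis linorder_neqE_nat)
qed

lemma connected_lobe: "connected_in p (lobe j)"
  using decomp_Suc(1)[of j] unfolding lobe_def by (intro connected_branch) auto

lemma lobe_finite_card: "finite (lobe j) \<and> card (lobe j) = (\<Sum>l<N (Suc j). (p + 1)^l)"
  using decomp_Suc(1)[of j] unfolding lobe_def by (intro branch_finite_card) auto

lemma lobe_subset_orbit: "lobe j \<subseteq> V"
proof
  fix w
  assume "w \<in> lobe j"
  then have "reach_in p (lobe j) u w"
    using connected_in_reach_in[OF connected_lobe self_mem_lobe] by blast
  then show "w \<in> V" using reach_in_orbit self_mem_orbit by blast
qed

lemma cut_vertex_mem_orbit: "cut_vertex j \<in> V"
  using cut_vertex_mem_lobe[of j "Suc j"] lobe_subset_orbit by blast

lemma comp_in_lobe: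
  assumes "y \<in> lobe j"
  shows "comp_in p (V - {cut_vertex j}) y = lobe j"
proof
  have "lobe j \<subseteq> V - {cut_vertex j}"
    using lobe_subset_orbit cut_vertex_not_mem_lobe by blast
  then show "lobe j \<subseteq> comp_in p (V - {cut_vertex j}) y"
    using connected_in_reach_in[OF connected_lobe assms] by (auto simp: comp_in_def)
next
  have "u (N (Suc j)) \<noteq> 0" and "u (N (Suc j)) \<noteq> a (Suc j)"
    using decomp_Suc(1,4)[of "Suc j"] decomp_Suc(2)[of j] by auto
  then have closed: "z' \<in> lobe j"
    if "z \<in> lobe j" "z' \<in> V - {cut_vertex j}" "sadj p z z'" for z z'
    using that branch_neighbour[of z p "N (Suc j)" "a (Suc j)" u z'] decomp_Suc(1)[of j]
    by (auto simp: lobe_def cut_vertex_def)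
  show "comp_in p (V - {cut_vertex j}) y \<subseteq> lobe j"
  proof
    fix z
    assume "z \<in> comp_in p (V - {cut_vertex j}) y"
    then have "reach_in p (V - {cut_vertex j}) y z" by (simp add: comp_in_def)
    then show "z \<in> lobe j" by (induction rule: reach_in_induct) (use assms closed in auto)
  qed
qed

lemma u_not_eventually_const: "\<exists>i\<ge>M. u i \<noteq> c"
proof (cases "u (N M) = c")
  case True
  then have "u (N (Suc M)) \<noteq> c" using decomp_Suc(2,4) by metis
  moreover have "M \<le> N (Suc M)"
    using strict_mono_imp_increasing[OF strict_mono_N, of "Suc M"] by simp
  ultimately show ?thesis by blast
next
  case False
  then show ?thesis using strict_mono_imp_increasing[OF strict_mono_N, of M] by blast
qed

lemma orbit_eventually_eq:
  assumes "w \<in> V"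
  shows "(\<forall>i. w i \<le> p) \<and> (\<exists>M. \<forall>i\<ge>M. w i = u i)"
proof -
  have "(sadj p)\<^sup>*\<^sup>* u w" using assms by (simp add: orbit_def)
  then show ?thesis
  proof (induction rule: rtranclp_induct)
    case base
    show ?case using letter_le by blast
  next
    case (step x y)
    obtain M where M: "\<forall>i\<ge>M. x i = u i" and le: "\<forall>i. x i \<le> p" using step.IH by blast
    obtain i where "i \<le> p" and "y = gen i x \<or> x = gen i y"
      using step.hyps(2) unfolding sadj_def by auto
    then consider "y = gen i x" | "x = gen i y" "\<exists>q. y q \<noteq> 0" | "x = gen i y" "\<forall>q. y q = 0"
      by blast
    then show ?case
    proof cases
      case 1
      obtain q where "q \<ge> M" "u q \<noteq> 0" using u_not_eventually_const by blast
      then have "\<forall>r\<ge>Suc q. y r = u r" using M 1 gen_eq_if_nonzero_before[of q _ x i] by auto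
      then show ?thesis using le 1 \<open>i \<le> p\<close> gen_le by blast
    next
      case 2
      then obtain q where "y q \<noteq> 0" by blast
      have "\<forall>r\<ge>Suc (max M q). y r = u r"
      proof (intro allI impI)
        fix r
        assume "Suc (max M q) \<le> r"
        then show "y r = u r" using M 2(1) gen_eq_if_nonzero_before[of q r y i] \<open>y q \<noteq> 0\<close> by simp
      qed
      then show ?thesis using le 2(1) \<open>i \<le> p\<close> gen_le_inv by blast
    next
      case 3
      then have "\<forall>r\<ge>M. u r = i" using M by (simp add: gen_if_zero_before)
      then show ?thesis using u_not_eventually_const by blast
    qed
  qed
qed

lemma eventually_mem_lobe:
  assumes "w \<in> V"
  obtains J where "\<forall>j\<ge>J. w \<in> lobe j"
proof -
  obtain M where M: "\<forall>i\<ge>M. w i = u i" and "\<forall>i. w i \<le> p"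
    using orbit_eventually_eq[OF assms] by blast
  have "\<forall>j\<ge>M. w \<in> lobe j"
  proof (intro allI impI)
    fix j
    assume "M \<le> j"
    then have "M \<le> N j" using strict_mono_imp_increasing[OF strict_mono_N, of j] by linarith
    with M \<open>\<forall>i. w i \<le> p\<close> show "w \<in> lobe j" by (intro mem_lobe) auto
  qed
  then show ?thesis using that by blast
qed

lemma cut_vertices_on_cycle:
  fixes j :: nat
  defines "n \<equiv> N (Suc (Suc j))" and "b \<equiv> a (Suc (Suc j))"
  obtains v0 where "v0 \<le> 2^n - 1"
    and "cut_vertex j = counter_word n b u v0"
    and "cut_vertex (Suc j) = counter_word n b u (2^n - 1)"
    and "gen b (counter_word n b u (2^n - 1)) = counter_word n b u 0"
proof -
  have "N (Suc j) < n" using strict_monoD[OF strict_mono_N] by (simp add: n_def)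
  then have "\<forall>i\<ge>n. cut_vertex j i = u i" by (simp add: cut_vertex_def zero_prefix_def)
  moreover have "cut_vertex j i = 0 \<or> cut_vertex j i = b" if "i < n" for i
    using that u_between_N[of "Suc j" i] decomp_Suc(4)[of "Suc j"]
    by (cases i "N (Suc j)" rule: linorder_cases)
      (auto simp: cut_vertex_def zero_prefix_def b_def n_def)
  ultimately obtain v0 where "v0 < 2^n" and v0: "cut_vertex j = counter_word n b u v0"
    using counter_word_surj by blast
  from \<open>v0 < 2^n\<close> have le: "v0 \<le> 2^n - 1" by simp
  have top: "cut_vertex (Suc j) = counter_word n b u (2^n - 1)"
    unfolding counter_word_top cut_vertex_def n_def ..
  have "u n \<noteq> 0" and "u n \<noteq> b"
    using decomp_Suc(1,4)[of "Suc (Suc j)"] decomp_Suc(2)[of "Suc j"] by (auto simp: n_def b_def)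
  then have "gen b (counter_word n b u (2^n - 1)) = counter_word n b u 0"
    unfolding counter_word_top by (rule gen_zero_prefix_eq_counter_word_0)
  with le v0 top show ?thesis by (rule that)
qed

text \<open>The two cut vertices split the cycle of length 2^n into two arcs meeting only at them,
  so any other removed vertex leaves one of the arcs intact.\<close>

lemma reach_in_cut_vertex_Suc:
  assumes "c \<noteq> cut_vertex j" and "c \<noteq> cut_vertex (Suc j)"
  shows "reach_in p (V - {c}) (cut_vertex j) (cut_vertex (Suc j))"
proof -
  define n b where "n = N (Suc (Suc j))" and "b = a (Suc (Suc j))"
  let ?W = "counter_word n b u" and ?M = "2^n - 1 :: nat"
  obtain v0 where "v0 \<le> ?M" and v0: "cut_vertex j = ?W v0"
    and top: "cut_vertex (Suc j) = ?W ?M" and wrap: "gen b (?W ?M) = ?W 0"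
    using cut_vertices_on_cycle unfolding n_def b_def by blast
  have b: "b \<in> {1..p}" and "b \<noteq> 0" using decomp_Suc(1)[of "Suc j"] by (auto simp: b_def)
  have "?M < 2^n" by simp
  with \<open>v0 \<le> ?M\<close> have "v0 < 2^n" by linarith
  have "reach_in p (- {c}) (cut_vertex j) (cut_vertex (Suc j))"
  proof (cases "\<forall>w\<in>{v0..?M}. ?W w \<noteq> c")
    case True
    then have "reach_in p (- {c}) (?W v0) (?W ?M)"
      by (intro reach_in_counter_word[OF b \<open>v0 \<le> ?M\<close> \<open>?M < 2^n\<close>]) auto
    then show ?thesis using v0 top by simp
  next
    case False
    then obtain w where w: "v0 \<le> w" "w \<le> ?M" "?W w = c" by auto
    have "?W w' \<noteq> c" if "w' \<le> v0" for w'
    proof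
      assume "?W w' = c"
      moreover have "w' < 2^n" "w < 2^n" using w that \<open>v0 \<le> ?M\<close> \<open>?M < 2^n\<close> by linarith+
      ultimately have "w' = w" using counter_word_inj[OF \<open>b \<noteq> 0\<close>] w(3) by metis
      then show False using that w v0 assms(1) by simp
    qed
    then have "\<forall>w'\<in>{0..v0}. ?W w' \<in> - {c}" by simp
    then have "reach_in p (- {c}) (?W 0) (?W v0)"
      using \<open>v0 < 2^n\<close> by (intro reach_in_counter_word[OF b]) auto
    moreover have "reach_in p (- {c}) (?W ?M) (?W 0)"
      using assms(2) top \<open>\<forall>w'\<in>{0..v0}. ?W w' \<in> - {c}\<close> sadj_gen[OF b, of "?W ?M"] wrap
      by (intro reach_in_edge) auto
    ultimately show ?thesis using v0 top by (metis reach_in_sym reach_in_trans)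
  qed
  then have "reach_in p (- {c} \<inter> V) (cut_vertex j) (cut_vertex (Suc j))"
    using reach_in_orbit cut_vertex_mem_orbit by blast
  moreover have "- {c} \<inter> V = V - {c}" by blast
  ultimately show ?thesis by simp
qed

lemma finite_component_eq_lobe:
  assumes "x \<in> V" and "x \<noteq> c" and fin: "finite (comp_in p (V - {c}) x)"
    and m: "cut_vertex m \<in> comp_in p (V - {c}) x"
  shows "\<exists>m'>m. comp_in p (V - {c}) x = lobe m'"
proof -
  let ?D = "comp_in p (V - {c}) x"
  have "\<exists>m'>m. c = cut_vertex m'"
  proof (rule ccontr)
    assume no_cut: "\<not> (\<exists>m'>m. c = cut_vertex m')"
    have "cut_vertex (m + d) \<in> ?D" for d
    proof (induction d)
      case (Suc d)
      then have "cut_vertex (m + d) \<noteq> c" using comp_in_subset \<open>x \<noteq> c\<close> by blast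
      then have "reach_in p (V - {c}) (cut_vertex (m + d)) (cut_vertex (Suc (m + d)))"
        using no_cut by (intro reach_in_cut_vertex_Suc) auto
      with Suc show ?case by (auto simp: comp_in_def intro: reach_in_trans)
    qed (use m in simp)
    then have "range (\<lambda>d. cut_vertex (m + d)) \<subseteq> ?D" by blast
    moreover have "inj (\<lambda>d. cut_vertex (m + d))"
      by (auto simp: inj_def dest: injD[OF inj_cut_vertex])
    ultimately have "finite (UNIV :: nat set)"
      using finite_subset[OF _ fin] finite_imageD by blast
    then show False by simp
  qed
  then obtain m' where "m' > m" "c = cut_vertex m'" by blast
  have "reach_in p (V - {c}) x (cut_vertex m)" using m by (simp add: comp_in_def)
  then have "?D = comp_in p (V - {c}) (cut_vertex m)" by (rule comp_in_eq)
  also have "\<dots> = lobe m'"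
    using comp_in_lobe[OF cut_vertex_mem_lobe[OF \<open>m' > m\<close>]] \<open>c = cut_vertex m'\<close> by simp
  finally show ?thesis using \<open>m' > m\<close> by blast
qed

end

section \<open>Matching the lobes of isomorphic Schreier graphs\<close>

lemma strict_mono_tails_eq:
  fixes A B :: "nat \<Rightarrow> nat"
  assumes A: "strict_mono A" and B: "strict_mono B"
    and AB: "\<forall>j\<ge>J. A j \<in> range B" and BA: "\<forall>m\<ge>J'. B m \<in> range A"
  shows "\<exists>l h. \<forall>n. A (l + n) = B (h + n)"
proof -
  have step: "A (Suc j) = B (Suc m)" if "A j = B m" "J \<le> j" "J' \<le> m" for j m
  proof (rule antisym)
    obtain m1 where m1: "A (Suc j) = B m1" using AB \<open>J \<le> j\<close> by (metis le_SucI rangeE)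
    then have "B m < B m1" using that(1) strict_monoD[OF A, of j "Suc j"] by simp
    then have "Suc m \<le> m1" using strict_mono_less[OF B] by (simp add: Suc_le_eq)
    then show "B (Suc m) \<le> A (Suc j)" using m1 strict_mono_less_eq[OF B] by simp
  next
    obtain j2 where j2: "B (Suc m) = A j2" using BA \<open>J' \<le> m\<close> by (metis le_SucI rangeE)
    then have "A j < A j2" using that(1) strict_monoD[OF B, of m "Suc m"] by simp
    then have "Suc j \<le> j2" using strict_mono_less[OF A] by (simp add: Suc_le_eq)
    then show "A (Suc j) \<le> B (Suc m)" using j2 strict_mono_less_eq[OF A] by simp
  qed
  define j0 where "j0 = J + B J'"
  obtain m0 where m0: "A j0 = B m0" using AB by (metis j0_def le_add1 rangeE)
  have "B J' \<le> B m0"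
    using m0 strict_mono_imp_increasing[OF A, of j0] by (simp add: j0_def)
  then have "J' \<le> m0" using strict_mono_less_eq[OF B] by blast
  have "A (j0 + n) = B (m0 + n)" for n
  proof (induction n)
    case (Suc n)
    with step[of "j0 + n" "m0 + n"] \<open>J' \<le> m0\<close> show ?case by (simp add: j0_def)
  qed (use m0 in simp)
  then show ?thesis by blast
qed

lemma strict_mono_geometric_sums: "strict_mono (\<lambda>n. \<Sum>l<n. (p + 1 :: nat)^l)"
  unfolding strict_mono_Suc_iff by simp

lemma eventually_lobe_size_shared:
  assumes U: "decomposed_word p u k a us" and W: "decomposed_word p v k' a' us'"
    and f: "adj_iso p f (orbit p u) (orbit p v)"
  shows "\<exists>J. \<forall>j\<ge>J. Npos k us (Suc j) \<in> range (\<lambda>m. Npos k' us' (Suc m))"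
proof -
  interpret U: decomposed_word p u k a us by (rule U)
  interpret W: decomposed_word p v k' a' us' by (rule W)
  have bij: "bij_betw f U.V W.V" using f by (simp add: adj_iso_def)
  define g0 where "g0 = inv_into U.V f (W.cut_vertex 0)"
  have "g0 \<in> U.V" and g0: "f g0 = W.cut_vertex 0"
    using bij_betwE[OF bij_betw_inv_into[OF bij]] bij_betw_inv_into_right[OF bij]
      W.cut_vertex_mem_orbit by (auto simp: g0_def)
  then obtain J where J: "\<forall>j\<ge>J. g0 \<in> U.lobe j" using U.eventually_mem_lobe by blast
  have "Npos k us (Suc j) \<in> range (\<lambda>m. Npos k' us' (Suc m))" if "J \<le> j" for j
  proof -
    let ?D = "comp_in p (W.V - {f (U.cut_vertex j)}) (f u)"
    have D: "?D = f ` U.lobe j"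
      using comp_in_remove_image[OF f U.cut_vertex_mem_orbit self_mem_orbit]
        U.comp_in_lobe[OF U.self_mem_lobe] by simp
    have inj: "inj_on f (U.lobe j)"
      using bij U.lobe_subset_orbit by (meson bij_betw_def inj_on_subset)
    have "u \<noteq> U.cut_vertex j" using U.self_mem_lobe[of j] U.cut_vertex_not_mem_lobe[of j] by auto
    then have "f u \<noteq> f (U.cut_vertex j)"
      using inj_on_eq_iff[OF bij_betw_imp_inj_on[OF bij] self_mem_orbit U.cut_vertex_mem_orbit]
      by simp
    moreover have "f u \<in> W.V" using bij_betwE[OF bij] self_mem_orbit by blast
    moreover have "finite ?D" using D U.lobe_finite_card by simp
    moreover have "W.cut_vertex 0 \<in> ?D" using D g0 J that by (metis imageI)
    ultimately obtain m where "?D = W.lobe m" using W.finite_component_eq_lobe by blast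
    then have "card (W.lobe m) = card (U.lobe j)" using D card_image[OF inj] by simp
    then have "(\<Sum>l<Npos k' us' (Suc m). (p + 1)^l) = (\<Sum>l<Npos k us (Suc j). (p + 1)^l)"
      using U.lobe_finite_card W.lobe_finite_card by simp
    then have "Npos k' us' (Suc m) = Npos k us (Suc j)"
      using strict_mono_eq[OF strict_mono_geometric_sums] by blast
    then show ?thesis by (metis rangeI)
  qed
  then show ?thesis by blast
qed

theorem lemma4p19:
  fixes p :: nat and u v :: "nat \<Rightarrow> nat"
    and k k' :: nat and a a' :: "nat \<Rightarrow> nat" and us us' :: "nat \<Rightarrow> nat list"
  assumes "p \<ge> 1"
    and "u \<in> E1 p" and "v \<in> E1 p"
    and "schreier_iso p u v"
    and "decomp p u k a us" and "decomp p v k' a' us'"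
  shows "compatible (Lseq k us) (Lseq k' us')"
proof -
  have U: "decomposed_word p u k a us" and W: "decomposed_word p v k' a' us'"
    using assms(2,3,5,6) by (simp_all add: decomposed_word_def E1_def)
  obtain f where f: "adj_iso p f (orbit p u) (orbit p v)"
    using schreier_iso_imp_adj_iso[OF assms(4)] by blast
  obtain J where "\<forall>j\<ge>J. Npos k us (Suc j) \<in> range (\<lambda>m. Npos k' us' (Suc m))"
    using eventually_lobe_size_shared[OF U W f] by blast
  moreover obtain J' where "\<forall>m\<ge>J'. Npos k' us' (Suc m) \<in> range (\<lambda>j. Npos k us (Suc j))"
    using eventually_lobe_size_shared[OF W U adj_iso_inv[OF f]] by blast
  moreover have "strict_mono (\<lambda>j. Npos k us (Suc j))" "strict_mono (\<lambda>m. Npos k' us' (Suc m))"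
    using decomposed_word.strict_mono_N[OF U] decomposed_word.strict_mono_N[OF W]
    by (simp_all add: strict_mono_def)
  ultimately obtain l h where "\<forall>n. Npos k us (Suc (l + n)) = Npos k' us' (Suc (h + n))"
    using strict_mono_tails_eq[of "\<lambda>j. Npos k us (Suc j)" "\<lambda>m. Npos k' us' (Suc m)"] by blast
  then have "\<forall>n. Lseq k us (l + n) = Lseq k' us' (h + n)" by (simp add: Lseq_def)
  then show ?thesis unfolding compatible_def by blast
qed

end
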